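(* Let $G$ be a connected (finite, simple) graph, $\mathcal{F}$ a maximum induced forest of $G$, $S=V(G)\setminus V(\mathcal{F})$, $H$ the contracted graph, and $B$ a skeleton of $H$ with the maximum possible number of 2-edges among all skeletons (all as defined in the context). Let $L_S$ be the set of vertices of $S$ that are leaves of $B$. Then for every vertex in $L_S$, the unique edge of $B$ incident to it is a 2-edge.
   Context: A maximum induced forest of $G$ is an induced forest of $G$ with the maximum number of vertices. Let $\mathcal{T}$ be the set of connected components (trees) of $\mathcal{F}$ and $S=V(G)\setminus V(\mathcal{F})$. The graph $H$ has vertex set $\{x_T : T\in\mathcal{T}\}\cup S$ (the $x_T$ are called tree vertices, the vertices of $S$ non-tree vertices) and edge set consisting of all edges of $G[S]$ together with all pairs $ux_T$ with $u\in S$, $T\in\mathcal{T}$ such that $u$ has at least one neighbor in $V(T)$ in $G$. An edge $ux_T$ of $H$ is a 2-edge if $u$ has at least two neighbors in $V(T)$ in $G$; all other edges of $H$ (including all edges with both endpoints in $S$) are 1-edges. A skeleton is a spanning tree of $H$ rooted at some tree vertex, with all edges directed towards the root (an in-arborescence). A leaf of $B$ is a vertex of total degree 1 in $B$. *)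

theory Defs
  imports Main
begin

definition restr :: "'a set \<Rightarrow> ('a \<Rightarrow> 'a \<Rightarrow> bool) \<Rightarrow> 'a \<Rightarrow> 'a \<Rightarrow> bool" where
  "restr V E = (\<lambda>x y. x \<in> V \<and> y \<in> V \<and> E x y)"

definition connected_graph :: "'a set \<Rightarrow> ('a \<Rightarrow> 'a \<Rightarrow> bool) \<Rightarrow> bool" where
  "connected_graph V E \<longleftrightarrow> V \<noteq> {} \<and> (\<forall>x\<in>V. \<forall>y\<in>V. (restr V E)\<^sup>*\<^sup>* x y)"

definition has_cycle :: "'a set \<Rightarrow> ('a \<Rightarrow> 'a \<Rightarrow> bool) \<Rightarrow> bool" where
  "has_cycle V E \<longleftrightarrow> (\<exists>cs. length cs \<ge> 3 \<and> distinct cs \<and> set cs \<subseteq> V \<and>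
      (\<forall>i < length cs. E (cs ! i) (cs ! ((i + 1) mod length cs))))"

definition forest :: "'a set \<Rightarrow> ('a \<Rightarrow> 'a \<Rightarrow> bool) \<Rightarrow> bool" where
  "forest V E \<longleftrightarrow> \<not> has_cycle V E"

definition is_tree :: "'a set \<Rightarrow> ('a \<Rightarrow> 'a \<Rightarrow> bool) \<Rightarrow> bool" where
  "is_tree V E \<longleftrightarrow> connected_graph V E \<and> forest V E"

definition components :: "'a set \<Rightarrow> ('a \<Rightarrow> 'a \<Rightarrow> bool) \<Rightarrow> 'a set set" where
  "components V E = {{y \<in> V. (restr V E)\<^sup>*\<^sup>* x y} | x. x \<in> V}"

definition max_induced_forest :: "'a set \<Rightarrow> ('a \<Rightarrow> 'a \<Rightarrow> bool) \<Rightarrow> 'a set \<Rightarrow> bool" where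
  "max_induced_forest V E F \<longleftrightarrow> F \<subseteq> V \<and> forest F E \<and>
     (\<forall>F'. F' \<subseteq> V \<and> forest F' E \<longrightarrow> card F' \<le> card F)"

text \<open>The contracted graph H: tree vertices are Inl T (T a component of G[F]),
  non-tree vertices are Inr u (u in S = V - F). Edges are unordered pairs.\<close>

definition H_verts :: "'a set \<Rightarrow> ('a \<Rightarrow> 'a \<Rightarrow> bool) \<Rightarrow> 'a set \<Rightarrow> ('a set + 'a) set" where
  "H_verts V E F = Inl ` components F E \<union> Inr ` (V - F)"

definition H_edges :: "'a set \<Rightarrow> ('a \<Rightarrow> 'a \<Rightarrow> bool) \<Rightarrow> 'a set \<Rightarrow> ('a set + 'a) set set" where
  "H_edges V E F =
     {{Inr u, Inr v} | u v. u \<in> V - F \<and> v \<in> V - F \<and> E u v} \<union>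
     {{Inr u, Inl T} | u T. u \<in> V - F \<and> T \<in> components F E \<and> (\<exists>w\<in>T. E u w)}"

definition two_edges :: "'a set \<Rightarrow> ('a \<Rightarrow> 'a \<Rightarrow> bool) \<Rightarrow> 'a set \<Rightarrow> ('a set + 'a) set set" where
  "two_edges V E F =
     {{Inr u, Inl T} | u T. u \<in> V - F \<and> T \<in> components F E \<and> card {w \<in> T. E u w} \<ge> 2}"

text \<open>A skeleton: spanning tree B of H (set of edges of H) with root r a tree vertex;
  the in-arborescence orientation towards r is determined by (r, B).\<close>
definition skeleton :: "'a set \<Rightarrow> ('a \<Rightarrow> 'a \<Rightarrow> bool) \<Rightarrow> 'a set \<Rightarrow> ('a set + 'a) \<Rightarrow> ('a set + 'a) set set \<Rightarrow> bool" where
  "skeleton V E F r B \<longleftrightarrow> r \<in> Inl ` components F E \<and> B \<subseteq> H_edges V E F \<and>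
     is_tree (H_verts V E F) (\<lambda>x y. {x, y} \<in> B)"

definition leaf :: "'b set set \<Rightarrow> 'b \<Rightarrow> bool" where
  "leaf B x \<longleftrightarrow> card {e \<in> B. x \<in> e} = 1"

end

theory Submission
  imports Defs
begin

text \<open>Suppose a leaf \<open>u \<in> S\<close> of \<open>B\<close> were attached by a 1-edge. By maximality of \<open>F\<close> the graph
  \<open>G[F \<union> {u}]\<close> contains a cycle, necessarily through \<open>u\<close>; the two cycle neighbours of \<open>u\<close> are joined
  by the rest of the cycle inside \<open>F\<close>, so they lie in one tree \<open>T\<close> and \<open>u x\<^sub>T\<close> is a 2-edge.
  Since \<open>u\<close> is a leaf, replacing its edge by \<open>u x\<^sub>T\<close> again yields a spanning tree of \<open>H\<close>, i.e. a
  skeleton with one more 2-edge than \<open>B\<close>.\<close>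

definition cycle_list :: "'a set \<Rightarrow> ('a \<Rightarrow> 'a \<Rightarrow> bool) \<Rightarrow> 'a list \<Rightarrow> bool" where
  "cycle_list V E cs \<longleftrightarrow> 3 \<le> length cs \<and> distinct cs \<and> set cs \<subseteq> V \<and>
     (\<forall>i < length cs. E (cs ! i) (cs ! ((i + 1) mod length cs)))"

lemma has_cycle_iff_cycle_list: "has_cycle V E \<longleftrightarrow> (\<exists>cs. cycle_list V E cs)"
  unfolding has_cycle_def cycle_list_def by blast

lemma cycle_list_mono:
  assumes "cycle_list V E cs" "set cs \<subseteq> V'"
    and "\<And>x y. x \<in> set cs \<Longrightarrow> y \<in> set cs \<Longrightarrow> E x y \<Longrightarrow> E' x y"
  shows "cycle_list V' E' cs"
  using assms unfolding cycle_list_def by (metis nth_mem mod_less_divisor not_numeral_le_zero gr0I)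

lemma cycle_list_rotate:
  assumes "cycle_list V E cs"
  shows "cycle_list V E (rotate k cs)"
proof -
  let ?n = "length cs"
  have "0 < ?n"
    using assms unfolding cycle_list_def by linarith
  have "E (rotate k cs ! i) (rotate k cs ! ((i + 1) mod ?n))" if "i < ?n" for i
  proof -
    have "rotate k cs ! i = cs ! ((k + i) mod ?n)"
      using that by (simp add: nth_rotate)
    moreover have "rotate k cs ! ((i + 1) mod ?n) = cs ! (((k + i) mod ?n + 1) mod ?n)"
      using that \<open>0 < ?n\<close> by (simp add: nth_rotate mod_simps add.assoc)
    moreover have "(k + i) mod ?n < ?n"
      using \<open>0 < ?n\<close> by simp
    ultimately show ?thesis
      using assms unfolding cycle_list_def by metis
  qed
  then show ?thesis
    using assms unfolding cycle_list_def by simp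
qed

lemma cycle_list_through:
  assumes "cycle_list V E cs" "x \<in> set cs"
  obtains cs' where "cycle_list V E cs'" "cs' ! 0 = x"
proof -
  obtain i where i: "i < length cs" "cs ! i = x"
    using assms(2) by (auto simp: in_set_conv_nth)
  have "cs \<noteq> []"
    using i by auto
  then have "rotate i cs ! 0 = x"
    using i nth_rotate[of 0 cs i] by simp
  then show ?thesis
    using that cycle_list_rotate[OF assms(1)] by blast
qed

lemma cycle_list_neighbours:
  assumes "cycle_list V E cs"
  defines "n \<equiv> length cs"
  shows "E (cs ! 0) (cs ! 1)" "E (cs ! (n - 1)) (cs ! 0)" "cs ! 1 \<noteq> cs ! (n - 1)"
    and "cs ! 1 \<noteq> cs ! 0" "cs ! (n - 1) \<noteq> cs ! 0"
proof -
  have n: "3 \<le> n" "distinct cs" and adj: "\<And>i. i < n \<Longrightarrow> E (cs ! i) (cs ! ((i + 1) mod n))"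
    using assms unfolding cycle_list_def by auto
  show "E (cs ! 0) (cs ! 1)"
    using adj[of 0] n by simp
  show "E (cs ! (n - 1)) (cs ! 0)"
    using adj[of "n - 1"] n by simp
  have "cs \<noteq> []"
    using n(1) unfolding n_def by auto
  show "cs ! 1 \<noteq> cs ! (n - 1)" "cs ! 1 \<noteq> cs ! 0" "cs ! (n - 1) \<noteq> cs ! 0"
    using n \<open>cs \<noteq> []\<close> nth_eq_iff_index_eq[OF n(2), of 1 "n - 1"] nth_eq_iff_index_eq[OF n(2), of 1 0]
      nth_eq_iff_index_eq[OF n(2), of "n - 1" 0]
    unfolding n_def by auto
qed

lemma rtranclp_chain:
  assumes "\<And>j. i \<le> j \<Longrightarrow> j < k \<Longrightarrow> R (f j) (f (Suc j))" "i \<le> k"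
  shows "R\<^sup>*\<^sup>* (f i) (f k)"
  using assms by (induction k) (auto simp: le_Suc_eq intro: rtranclp.rtrancl_into_rtrancl)

lemma forest_insert_cycle_neighbours:
  assumes "forest F E" "\<not> forest (insert u F) E"
  obtains a b where "a \<in> F" "b \<in> F" "a \<noteq> b" "E u a" "E b u" "(restr F E)\<^sup>*\<^sup>* a b"
proof -
  obtain cs0 where cs0: "cycle_list (insert u F) E cs0"
    using assms(2) unfolding forest_def has_cycle_iff_cycle_list by blast
  have "u \<in> set cs0"
  proof (rule ccontr)
    assume "u \<notin> set cs0"
    have "cycle_list F E cs0"
    proof (rule cycle_list_mono[OF cs0])
      show "set cs0 \<subseteq> F"
        using cs0 \<open>u \<notin> set cs0\<close> unfolding cycle_list_def by blast
    qed
    then show False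
      using assms(1) unfolding forest_def has_cycle_iff_cycle_list by blast
  qed
  then obtain cs where cs: "cycle_list (insert u F) E cs" "cs ! 0 = u"
    using cycle_list_through[OF cs0] by blast
  define n where "n = length cs"
  have n: "3 \<le> n" "distinct cs" "set cs \<subseteq> insert u F"
    and adj: "\<And>i. i < n \<Longrightarrow> E (cs ! i) (cs ! ((i + 1) mod n))"
    using cs unfolding cycle_list_def n_def by auto
  have inF: "cs ! j \<in> F" if "0 < j" "j < n" for j
  proof -
    have "j < length cs" "0 < length cs"
      using that unfolding n_def by auto
    then have "cs ! j \<noteq> u"
      using nth_eq_iff_index_eq[OF n(2)] that(1) cs(2) by fastforce
    then show ?thesis
      using n(3) nth_mem[OF \<open>j < length cs\<close>] by blast
  qed
  have "(restr F E)\<^sup>*\<^sup>* (cs ! 1) (cs ! (n - 1))"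
  proof (rule rtranclp_chain[where f = "(!) cs"])
    fix j assume "1 \<le> j" "j < n - 1"
    then show "restr F E (cs ! j) (cs ! Suc j)"
      using adj[of j] inF[of j] inF[of "Suc j"] by (simp add: restr_def)
  qed (use n in simp)
  then show ?thesis
    using that[of "cs ! 1" "cs ! (n - 1)"] cycle_list_neighbours[OF cs(1)] inF n cs(2)
    by (simp add: n_def)
qed

text \<open>A walk can enter or leave the leaf \<open>c\<close> only through \<open>w\<close>, so dropping its visits to \<open>c\<close>
  leaves a walk in the tree without \<open>c\<close>.\<close>

lemma rtranclp_restr_delete_leaf:
  assumes leaf_edge: "\<And>e. e \<in> B \<Longrightarrow> c \<in> e \<Longrightarrow> e = {c, w}"
    and "(restr V (\<lambda>x y. {x, y} \<in> B))\<^sup>*\<^sup>* x y" "x \<noteq> c"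
  shows "(restr (V - {c}) (\<lambda>x y. {x, y} \<in> B - {{c, w}}))\<^sup>*\<^sup>* x (if y = c then w else y)"
  using assms(2)
proof (induction rule: rtranclp_induct)
  case base
  then show ?case
    using assms(3) by simp
next
  case (step z y)
  show ?case
  proof (cases "y = c")
    case True
    then have "{z, c} = {c, w}"
      using leaf_edge step(2) unfolding restr_def by auto
    then have "z = w \<or> z = c"
      by (auto simp: doubleton_eq_iff)
    then show ?thesis
      using step(3) True by auto
  next
    case False
    show ?thesis
    proof (cases "z = c")
      case True
      then have "{c, y} = {c, w}"
        using leaf_edge step(2) unfolding restr_def by auto
      then show ?thesis
        using step(3) True \<open>y \<noteq> c\<close> by (auto simp: doubleton_eq_iff)
    next
      case False
      then have "restr (V - {c}) (\<lambda>x y. {x, y} \<in> B - {{c, w}}) z y"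
        using step(2) \<open>y \<noteq> c\<close> unfolding restr_def by (auto simp: doubleton_eq_iff)
      then show ?thesis
        using step(3) False \<open>y \<noteq> c\<close> by auto
    qed
  qed
qed

lemma connected_graph_move_leaf:
  assumes conn: "connected_graph V (\<lambda>x y. {x, y} \<in> B)"
    and leaf_edge: "\<And>e. e \<in> B \<Longrightarrow> c \<in> e \<Longrightarrow> e = {c, w}"
    and "c \<in> V" "t \<in> V" "t \<noteq> c"
  shows "connected_graph V (\<lambda>x y. {x, y} \<in> insert {c, t} (B - {{c, w}}))"
proof -
  let ?R = "restr V (\<lambda>x y. {x, y} \<in> B)"
  let ?R' = "restr V (\<lambda>x y. {x, y} \<in> insert {c, t} (B - {{c, w}}))"
  let ?R'' = "restr (V - {c}) (\<lambda>x y. {x, y} \<in> B - {{c, w}})"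
  have sub: "?R'' \<le> ?R'"
    unfolding restr_def by auto
  have to_t: "?R'\<^sup>*\<^sup>* x t \<and> ?R'\<^sup>*\<^sup>* t x" if "x \<in> V" for x
  proof (cases "x = c")
    case True
    then have "?R' x t" "?R' t x"
      using assms(3-5) unfolding restr_def by (auto simp: insert_commute)
    then show ?thesis
      by auto
  next
    case False
    have "?R\<^sup>*\<^sup>* x t" "?R\<^sup>*\<^sup>* t x"
      using conn that assms(4) unfolding connected_graph_def by auto
    then have "?R''\<^sup>*\<^sup>* x t" "?R''\<^sup>*\<^sup>* t x"
      using rtranclp_restr_delete_leaf[OF leaf_edge, where x = x and y = t] False
        rtranclp_restr_delete_leaf[OF leaf_edge, where x = t and y = x] assms(5)
      by simp_all
    then have "?R'\<^sup>*\<^sup>* x t" "?R'\<^sup>*\<^sup>* t x"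
      using rtranclp_mono[OF sub] by (auto dest: predicate2D)
    then show ?thesis
      by blast
  qed
  show ?thesis
    using conn to_t unfolding connected_graph_def by (meson rtranclp_trans)
qed

lemma forest_move_leaf:
  assumes acyclic: "forest V (\<lambda>x y. {x, y} \<in> B)"
    and leaf_edge: "\<And>e. e \<in> B \<Longrightarrow> c \<in> e \<Longrightarrow> e = {c, w}"
  shows "forest V (\<lambda>x y. {x, y} \<in> insert {c, t} (B - {{c, w}}))"
  unfolding forest_def
proof
  let ?B' = "insert {c, t} (B - {{c, w}})"
  assume "has_cycle V (\<lambda>x y. {x, y} \<in> ?B')"
  then obtain cs0 where cs0: "cycle_list V (\<lambda>x y. {x, y} \<in> ?B') cs0"
    unfolding has_cycle_iff_cycle_list by blast
  show False
  proof (cases "c \<in> set cs0")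
    case False
    have "cycle_list V (\<lambda>x y. {x, y} \<in> B) cs0"
    proof (rule cycle_list_mono[OF cs0])
      show "set cs0 \<subseteq> V"
        using cs0 unfolding cycle_list_def by simp
    next
      fix x y
      assume "x \<in> set cs0" "y \<in> set cs0" "{x, y} \<in> ?B'"
      then show "{x, y} \<in> B"
        using False by auto
    qed
    then show False
      using acyclic unfolding forest_def has_cycle_iff_cycle_list by blast
  next
    case True
    then obtain cs where cs: "cycle_list V (\<lambda>x y. {x, y} \<in> ?B') cs" "cs ! 0 = c"
      using cycle_list_through[OF cs0] by blast
    \<comment> \<open>both cycle neighbours of \<open>c\<close> would have to be \<open>t\<close>\<close>
    have only_t: "x = t" if "{c, x} \<in> ?B'" "x \<noteq> c" for x
      using that leaf_edge[of "{c, x}"] by (auto simp: doubleton_eq_iff)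
    define n where "n = length cs"
    have "cs ! 1 = t" "cs ! (n - 1) = t"
      using cycle_list_neighbours[OF cs(1)] only_t cs(2) unfolding n_def
      by (simp_all add: insert_commute)
    then show False
      using cycle_list_neighbours(3)[OF cs(1)] unfolding n_def by simp
  qed
qed

lemma leaf_unique_edge:
  assumes "leaf B x" "e \<in> B" "x \<in> e" "e' \<in> B" "x \<in> e'"
  shows "e' = e"
proof -
  obtain e0 where e0: "{e \<in> B. x \<in> e} = {e0}"
    using assms(1) unfolding leaf_def by (rule card_1_singletonE)
  have "e \<in> {e \<in> B. x \<in> e}" "e' \<in> {e \<in> B. x \<in> e}"
    using assms(2-5) by simp_all
  then show ?thesis
    unfolding e0 by simp
qed

lemma H_edges_subset_Pow: "H_edges V E F \<subseteq> Pow (H_verts V E F)"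
  unfolding H_edges_def H_verts_def by blast

lemma finite_H_edges:
  assumes "finite V" "F \<subseteq> V"
  shows "finite (H_edges V E F)"
proof -
  have "finite F"
    using assms finite_subset by blast
  moreover have "components F E \<subseteq> Pow F"
    unfolding components_def by blast
  ultimately have "finite (components F E)"
    using finite_subset by blast
  then have "finite (H_verts V E F)"
    using assms(1) unfolding H_verts_def by blast
  then show ?thesis
    using finite_subset[OF H_edges_subset_Pow] by simp
qed

lemma H_edge_doubleton:
  assumes "e \<in> H_edges V E F" "x \<in> e"
  obtains y where "e = {x, y}"
  using assms unfolding H_edges_def by blast

lemma two_edges_subset_H_edges: "two_edges V E F \<subseteq> H_edges V E F"
proof
  fix f
  assume "f \<in> two_edges V E F"
  then obtain u T where "f = {Inr u, Inl T}" "u \<in> V - F" "T \<in> components F E"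
    and "2 \<le> card {w \<in> T. E u w}"
    unfolding two_edges_def by blast
  moreover from this(4) have "{w \<in> T. E u w} \<noteq> {}"
    by (metis card.empty not_numeral_le_zero)
  then have "\<exists>w\<in>T. E u w"
    by blast
  ultimately show "f \<in> H_edges V E F"
    unfolding H_edges_def by blast
qed

lemma max_induced_forest_two_edge:
  assumes "finite V" "max_induced_forest V E F" "\<And>x y. E x y \<Longrightarrow> E y x" "u \<in> V - F"
  obtains T where "{Inr u, Inl T} \<in> two_edges V E F"
proof -
  have FV: "F \<subseteq> V" and forest: "forest F E"
    and max: "\<And>F'. F' \<subseteq> V \<Longrightarrow> forest F' E \<Longrightarrow> card F' \<le> card F"
    using assms(2) unfolding max_induced_forest_def by auto
  have "finite F"
    using FV assms(1) finite_subset by blast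
  moreover have "insert u F \<subseteq> V" "u \<notin> F"
    using FV assms(4) by auto
  ultimately have "\<not> forest (insert u F) E"
    using max[of "insert u F"] by auto
  then obtain a b where ab: "a \<in> F" "b \<in> F" "a \<noteq> b" "E u a" "E b u" "(restr F E)\<^sup>*\<^sup>* a b"
    using forest_insert_cycle_neighbours[OF forest] by blast
  define T where "T = {y \<in> F. (restr F E)\<^sup>*\<^sup>* a y}"
  have "T \<in> components F E"
    unfolding components_def T_def using ab(1) by blast
  moreover have "2 \<le> card {w \<in> T. E u w}"
  proof -
    have "{a, b} \<subseteq> {w \<in> T. E u w}"
      using ab assms(3) unfolding T_def by auto
    moreover have "finite {w \<in> T. E u w}"
      using \<open>finite F\<close> unfolding T_def by simp
    ultimately have "card {a, b} \<le> card {w \<in> T. E u w}"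
      by (rule card_mono[rotated])
    then show ?thesis
      using ab(3) by simp
  qed
  ultimately have "{Inr u, Inl T} \<in> two_edges V E F"
    unfolding two_edges_def using assms(4) by blast
  then show ?thesis
    by (rule that)
qed

lemma skeleton_move_leaf:
  assumes "skeleton V E F r B"
    and leaf_edge: "\<And>e. e \<in> B \<Longrightarrow> c \<in> e \<Longrightarrow> e = {c, w}"
    and "{c, t} \<in> H_edges V E F" "t \<noteq> c"
  shows "skeleton V E F r (insert {c, t} (B - {{c, w}}))"
proof -
  have sk: "r \<in> Inl ` components F E" "B \<subseteq> H_edges V E F"
    "connected_graph (H_verts V E F) (\<lambda>x y. {x, y} \<in> B)" "forest (H_verts V E F) (\<lambda>x y. {x, y} \<in> B)"
    using assms(1) unfolding skeleton_def is_tree_def by auto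
  have "c \<in> H_verts V E F" "t \<in> H_verts V E F"
    using assms(3) H_edges_subset_Pow by blast+
  then have "is_tree (H_verts V E F) (\<lambda>x y. {x, y} \<in> insert {c, t} (B - {{c, w}}))"
    unfolding is_tree_def
    using connected_graph_move_leaf[OF sk(3) leaf_edge] forest_move_leaf[OF sk(4) leaf_edge] assms(4)
    by blast
  moreover have "insert {c, t} (B - {{c, w}}) \<subseteq> H_edges V E F"
    using sk(2) assms(3) by blast
  ultimately show ?thesis
    using sk(1) unfolding skeleton_def by blast
qed

theorem corollary2:
  fixes V :: "'a set" and E :: "'a \<Rightarrow> 'a \<Rightarrow> bool"
    and F :: "'a set" and r :: "'a set + 'a" and B :: "('a set + 'a) set set"
  assumes "finite V"
    and "\<And>x y. E x y \<Longrightarrow> x \<in> V \<and> y \<in> V"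
    and "\<And>x y. E x y \<Longrightarrow> E y x"
    and "\<And>x. \<not> E x x"
    and "connected_graph V E"
    and "max_induced_forest V E F"
    and "skeleton V E F r B"
    and "\<And>r' B'. skeleton V E F r' B' \<Longrightarrow>
           card (B' \<inter> two_edges V E F) \<le> card (B \<inter> two_edges V E F)"
  shows "\<forall>u \<in> V - F. leaf B (Inr u) \<longrightarrow> (\<forall>e \<in> B. Inr u \<in> e \<longrightarrow> e \<in> two_edges V E F)"
proof (intro ballI impI)
  fix u e
  assume u: "u \<in> V - F" and "leaf B (Inr u)" "e \<in> B" "Inr u \<in> e"
  then have leaf_edge: "\<And>e'. e' \<in> B \<Longrightarrow> Inr u \<in> e' \<Longrightarrow> e' = e"
    using leaf_unique_edge by metis
  have B: "B \<subseteq> H_edges V E F"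
    using assms(7) unfolding skeleton_def by blast
  moreover have "F \<subseteq> V"
    using assms(6) unfolding max_induced_forest_def by blast
  ultimately have "finite B"
    using finite_H_edges[OF assms(1)] finite_subset by blast
  obtain w where e: "e = {Inr u, w}"
    using H_edge_doubleton \<open>e \<in> B\<close> \<open>Inr u \<in> e\<close> B by blast
  obtain T where two: "{Inr u, Inl T} \<in> two_edges V E F"
    using max_induced_forest_two_edge[OF assms(1,6,3) u] by blast
  show "e \<in> two_edges V E F"
  proof (rule ccontr)
    assume "e \<notin> two_edges V E F"
    let ?B' = "insert {Inr u, Inl T} (B - {e})"
    have "skeleton V E F r ?B'"
      using skeleton_move_leaf[OF assms(7), of "Inr u" w "Inl T"] leaf_edge two
        two_edges_subset_H_edges e by blast
    moreover have "{Inr u, Inl T} \<notin> B"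
      using leaf_edge two \<open>e \<notin> two_edges V E F\<close> by blast
    moreover have "?B' \<inter> two_edges V E F = insert {Inr u, Inl T} (B \<inter> two_edges V E F)"
      using two \<open>e \<notin> two_edges V E F\<close> by blast
    ultimately have "card (?B' \<inter> two_edges V E F) = Suc (card (B \<inter> two_edges V E F))"
      using \<open>finite B\<close> by simp
    then show False
      using assms(8)[OF \<open>skeleton V E F r ?B'\<close>] by simp
  qed
qed

end
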